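(* Any rule defined on $\mathcal{E}_{\mathcal{SP}}$ that satisfies own-peak-onliness, peak responsiveness, and not obvious manipulability (NOM) meets the equal division guarantee.
   Context: Let $N=\{1,\dots,n\}$ be a finite set of agents. A preference $R_i$ is a continuous complete preorder on $\mathbb{R}_+\cup\{\infty\}$ ($P_i$ strict, $I_i$ indifference); its peak $p(R_i)$ is the set of maximal elements. $R_i$ is single-peaked if $p(R_i)$ is a singleton (identified with its element, possibly $\infty$) and for $x,x'\in\mathbb{R}_+$, $xP_ix'$ whenever $x'<x\le p(R_i)$ or $p(R_i)\le x<x'$; $\mathcal{SP}$ is the set of these. An economy is $(R,\Omega)$, $R\in\mathcal{SP}^n$, $\Omega>0$; $\mathcal{E}_{\mathcal{SP}}$ is the set of economies; a rule is a map $\varphi:\mathcal{E}_{\mathcal{SP}}\to\mathbb{R}^n_+$ with $\sum_j\varphi_j(R,\Omega)=\Omega$. Own-peak-onliness: $p(R_i')=p(R_i)$ implies $\varphi_i(R,\Omega)=\varphi_i(R_i',R_{-i},\Omega)$. Peak responsiveness: for $i\ne j$, $p(R_i)\le p(R_j)$ implies $\varphi_i(R,\Omega)\le\varphi_j(R,\Omega)$. Equal division guarantee: $p(R_i)=\Omega/n$ implies $\varphi_i(R,\Omega)I_i\Omega/n$. Option set $O^\varphi(R_i,\Omega)=\{\varphi_i(R_i,R_{-i},\Omega):R_{-i}\in\mathcal{SP}^{n-1}\}$; $R_i'$ is a manipulation at $(R_i,\Omega)$ if $\varphi_i(R_i',R_{-i},\Omega)P_i\varphi_i(R_i,R_{-i},\Omega)$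 for some $R_{-i}$, and an obvious manipulation if moreover each $x'\in O^\varphi(R_i',\Omega)$ satisfies $x'P_ix$ for some $x\in O^\varphi(R_i,\Omega)$; NOM means no obvious manipulation exists. *)

theory Defs
  imports "HOL-Analysis.Analysis" "HOL-Library.Extended_Nonnegative_Real"
begin

text \<open>The consumption space R_+ \<union> {\<infinity>} is modelled by ennreal = [0,\<infinity>] with its order topology.
  A preference is a binary relation R x y meaning "x R y" (x is weakly preferred to y).
  Agents form a finite type 'n (N = UNIV, n = CARD('n)).\<close>

type_synonym pref = "ennreal \<Rightarrow> ennreal \<Rightarrow> bool"

definition strict_pref :: "pref \<Rightarrow> ennreal \<Rightarrow> ennreal \<Rightarrow> bool" where
  "strict_pref R x y \<longleftrightarrow> R x y \<and> \<not> R y x"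

definition indiff :: "pref \<Rightarrow> ennreal \<Rightarrow> ennreal \<Rightarrow> bool" where
  "indiff R x y \<longleftrightarrow> R x y \<and> R y x"

definition continuous_complete_preorder :: "pref \<Rightarrow> bool" where
  "continuous_complete_preorder R \<longleftrightarrow>
     (\<forall>x y. R x y \<or> R y x) \<and>
     (\<forall>x y z. R x y \<longrightarrow> R y z \<longrightarrow> R x z) \<and>
     (\<forall>x. closed {y. R y x}) \<and> (\<forall>x. closed {y. R x y})"

definition peak :: "pref \<Rightarrow> ennreal set" where
  "peak R = {x. \<forall>y. R x y}"

definition single_peaked :: "pref \<Rightarrow> bool" where
  "single_peaked R \<longleftrightarrow> continuous_complete_preorder R \<and>
     (\<exists>p. peak R = {p} \<and>
        (\<forall>x x' :: real. 0 \<le> x \<longrightarrow> 0 \<le> x' \<longrightarrow>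
           ((x' < x \<and> ennreal x \<le> p) \<or> (p \<le> ennreal x \<and> x < x')) \<longrightarrow>
           strict_pref R (ennreal x) (ennreal x')))"

definition SP :: "pref set" where
  "SP = {R. single_peaked R}"

definition the_peak :: "pref \<Rightarrow> ennreal" where
  "the_peak R = (THE p. peak R = {p})"

type_synonym 'n rule = "('n \<Rightarrow> pref) \<Rightarrow> real \<Rightarrow> 'n \<Rightarrow> real"

definition is_rule :: "('n::finite) rule \<Rightarrow> bool" where
  "is_rule \<phi> \<longleftrightarrow> (\<forall>R \<Omega>. (\<forall>i. R i \<in> SP) \<longrightarrow> \<Omega> > 0 \<longrightarrow>
      (\<forall>i. \<phi> R \<Omega> i \<ge> 0) \<and> (\<Sum>i\<in>UNIV. \<phi> R \<Omega> i) = \<Omega>)"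

definition own_peak_only :: "('n::finite) rule \<Rightarrow> bool" where
  "own_peak_only \<phi> \<longleftrightarrow> (\<forall>R \<Omega> i Ri'. (\<forall>j. R j \<in> SP) \<longrightarrow> \<Omega> > 0 \<longrightarrow> Ri' \<in> SP \<longrightarrow>
      peak Ri' = peak (R i) \<longrightarrow> \<phi> R \<Omega> i = \<phi> (R(i := Ri')) \<Omega> i)"

definition peak_responsive :: "('n::finite) rule \<Rightarrow> bool" where
  "peak_responsive \<phi> \<longleftrightarrow> (\<forall>R \<Omega> i j. (\<forall>k. R k \<in> SP) \<longrightarrow> \<Omega> > 0 \<longrightarrow> i \<noteq> j \<longrightarrow>
      the_peak (R i) \<le> the_peak (R j) \<longrightarrow> \<phi> R \<Omega> i \<le> \<phi> R \<Omega> j)"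

definition equal_division_guarantee :: "('n::finite) rule \<Rightarrow> bool" where
  "equal_division_guarantee \<phi> \<longleftrightarrow> (\<forall>R \<Omega> i. (\<forall>k. R k \<in> SP) \<longrightarrow> \<Omega> > 0 \<longrightarrow>
      the_peak (R i) = ennreal (\<Omega> / real CARD('n)) \<longrightarrow>
      indiff (R i) (ennreal (\<phi> R \<Omega> i)) (ennreal (\<Omega> / real CARD('n))))"

definition option_set :: "('n::finite) rule \<Rightarrow> 'n \<Rightarrow> pref \<Rightarrow> real \<Rightarrow> real set" where
  "option_set \<phi> i Ri \<Omega> = {\<phi> (R(i := Ri)) \<Omega> i | R. \<forall>j. j \<noteq> i \<longrightarrow> R j \<in> SP}"

definition manipulation :: "('n::finite) rule \<Rightarrow> 'n \<Rightarrow> pref \<Rightarrow> pref \<Rightarrow> real \<Rightarrow> bool" where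
  "manipulation \<phi> i Ri Ri' \<Omega> \<longleftrightarrow> (\<exists>R. (\<forall>j. j \<noteq> i \<longrightarrow> R j \<in> SP) \<and>
      strict_pref Ri (ennreal (\<phi> (R(i := Ri')) \<Omega> i)) (ennreal (\<phi> (R(i := Ri)) \<Omega> i)))"

definition obvious_manipulation :: "('n::finite) rule \<Rightarrow> 'n \<Rightarrow> pref \<Rightarrow> pref \<Rightarrow> real \<Rightarrow> bool" where
  "obvious_manipulation \<phi> i Ri Ri' \<Omega> \<longleftrightarrow> manipulation \<phi> i Ri Ri' \<Omega> \<and>
      (\<forall>x'\<in>option_set \<phi> i Ri' \<Omega>. \<exists>x\<in>option_set \<phi> i Ri \<Omega>.
          strict_pref Ri (ennreal x') (ennreal x))"

definition NOM :: "('n::finite) rule \<Rightarrow> bool" where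
  "NOM \<phi> \<longleftrightarrow> (\<forall>i Ri Ri' \<Omega>. Ri \<in> SP \<longrightarrow> Ri' \<in> SP \<longrightarrow> \<Omega> > 0 \<longrightarrow>
      \<not> obvious_manipulation \<phi> i Ri Ri' \<Omega>)"

end

theory Submission
  imports Defs
begin

text \<open>Let agent \<open>i\<close> have peak \<open>P = \<Omega>/n\<close> and suppose she receives \<open>x \<noteq> P\<close>; by own-peak-onliness
  she receives \<open>x\<close> under every preference with peak \<open>P\<close>. By peak responsiveness, reporting the
  peak \<open>\<infinity>\<close> guarantees at least \<open>\<Omega>/n\<close>, and reporting the peak \<open>0\<close> at most \<open>\<Omega>/n\<close>. If \<open>x < P\<close>, take
  the true preference with peak \<open>P\<close> whose loss is \<open>P - y\<close> below the peak and only \<open>k (y - P)\<close>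
  above it, for \<open>k\<close> so small that every amount in \<open>[P, \<Omega>]\<close> beats \<open>x\<close>: then every option of the
  report \<open>\<infinity>\<close> beats the outcome \<open>x\<close> of truth-telling, an obvious manipulation. If \<open>x > P\<close>, a
  large \<open>k\<close> and the report \<open>0\<close> do the same.\<close>

definition pref_of_loss :: "(ennreal \<Rightarrow> ennreal) \<Rightarrow> pref" where
  "pref_of_loss u = (\<lambda>a b. u a \<le> u b)"

lemma continuous_complete_preorder_pref_of_loss:
  "continuous_on UNIV u \<Longrightarrow> continuous_complete_preorder (pref_of_loss u)"
  unfolding continuous_complete_preorder_def pref_of_loss_def
  by (auto intro!: closed_Collect_le continuous_on_const)

lemma strict_pref_pref_of_loss: "strict_pref (pref_of_loss u) a b \<longleftrightarrow> u a < u b"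
  unfolding strict_pref_def pref_of_loss_def by auto

lemma peak_pref_of_loss:
  assumes "u p = 0" and "\<And>y. u y = 0 \<Longrightarrow> y = p"
  shows "peak (pref_of_loss u) = {p}"
proof -
  have "x \<in> peak (pref_of_loss u) \<longleftrightarrow> u x = 0" for x
    unfolding peak_def pref_of_loss_def using assms(1) by (auto intro: zero_le dest: spec[of _ p])
  then show ?thesis
    using assms by blast
qed

lemma the_peakI: "peak R = {p} \<Longrightarrow> the_peak R = p"
  unfolding the_peak_def by auto

lemma peak_eq_the_peak: "R \<in> SP \<Longrightarrow> peak R = {the_peak R}"
  unfolding SP_def single_peaked_def using the_peakI by force

lemma indiff_refl: "R \<in> SP \<Longrightarrow> indiff R a a"
  unfolding SP_def single_peaked_def continuous_complete_preorder_def indiff_def by blast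

definition kink_loss :: "real \<Rightarrow> real \<Rightarrow> real \<Rightarrow> real" where
  "kink_loss P k y = max 0 (P - y) + k * max 0 (y - P)"

text \<open>Truncated subtraction on \<^typ>\<open>ennreal\<close> extends \<^const>\<open>kink_loss\<close> continuously to
  \<open>[0, \<infinity>]\<close>, with loss \<open>\<infinity>\<close> at \<open>\<infinity>\<close>.\<close>

definition kinked_pref :: "real \<Rightarrow> real \<Rightarrow> pref" where
  "kinked_pref P k = pref_of_loss (\<lambda>y. (ennreal P - y) + ennreal k * (y - ennreal P))"

lemma kink_loss_nonneg: "k \<ge> 0 \<Longrightarrow> kink_loss P k y \<ge> 0"
  unfolding kink_loss_def by simp

lemma kink_loss_eq_0_iff: "k > 0 \<Longrightarrow> kink_loss P k y = 0 \<longleftrightarrow> y = P"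
  unfolding kink_loss_def by (cases "y < P") (auto simp: max_def)

lemma kink_loss_strict_mono:
  "k > 0 \<Longrightarrow> (y' < y \<and> y \<le> P) \<or> (P \<le> y \<and> y < y') \<Longrightarrow> kink_loss P k y < kink_loss P k y'"
  unfolding kink_loss_def by (auto simp: max_def mult_strict_left_mono)

lemma ennreal_kink_loss:
  assumes "P \<ge> 0" "y \<ge> 0" "k \<ge> 0"
  shows "(ennreal P - ennreal y) + ennreal k * (ennreal y - ennreal P) = ennreal (kink_loss P k y)"
  using assms unfolding kink_loss_def
  by (cases "y \<le> P") (simp_all add: ennreal_minus ennreal_neg ennreal_plus[symmetric] ennreal_mult[symmetric])

lemma strict_pref_kinked_pref:
  assumes "P \<ge> 0" "k > 0" "a \<ge> 0" "b \<ge> 0"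
  shows "strict_pref (kinked_pref P k) (ennreal a) (ennreal b) \<longleftrightarrow> kink_loss P k a < kink_loss P k b"
  using assms kink_loss_nonneg[of k P a]
  by (simp add: kinked_pref_def strict_pref_pref_of_loss ennreal_kink_loss ennreal_less_iff)

lemma kinked_pref_SP:
  assumes "P \<ge> 0" "k > 0"
  shows "kinked_pref P k \<in> SP" and "peak (kinked_pref P k) = {ennreal P}"
proof -
  let ?u = "\<lambda>y. (ennreal P - y) + ennreal k * (y - ennreal P)"
  have loss_zero_iff: "?u y = 0 \<longleftrightarrow> y = ennreal P" for y
  proof (cases y)
    case (real r)
    then have "?u y = ennreal (kink_loss P k r)"
      using assms by (simp add: ennreal_kink_loss)
    then show ?thesis
      using real assms kink_loss_nonneg[of k P r] kink_loss_eq_0_iff[of k P r]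
      by (simp add: ennreal_eq_0_iff ennreal_inj)
  qed (use assms in \<open>simp add: ennreal_mult_top\<close>)
  show peak: "peak (kinked_pref P k) = {ennreal P}"
    unfolding kinked_pref_def by (rule peak_pref_of_loss) (use loss_zero_iff in auto)
  have "continuous_on UNIV ?u"
    using assms(2) unfolding continuous_on_def by (auto intro!: tendsto_intros)
  then have "continuous_complete_preorder (kinked_pref P k)"
    unfolding kinked_pref_def by (rule continuous_complete_preorder_pref_of_loss)
  moreover have "strict_pref (kinked_pref P k) (ennreal y) (ennreal y')"
    if "0 \<le> y" "0 \<le> y'" "(y' < y \<and> ennreal y \<le> ennreal P) \<or> (ennreal P \<le> ennreal y \<and> y < y')" for y y'
    using that assms kink_loss_strict_mono[of k y' y P]
    by (simp add: strict_pref_kinked_pref ennreal_le_iff)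
  ultimately show "kinked_pref P k \<in> SP"
    unfolding SP_def single_peaked_def using peak by blast
qed

lemma kinked_pref_prefers_above:
  assumes "0 \<le> x" "x < P" "0 \<le> \<Omega>"
  obtains k where "k > 0" "\<And>y. P \<le> y \<Longrightarrow> y \<le> \<Omega> \<Longrightarrow> strict_pref (kinked_pref P k) (ennreal y) (ennreal x)"
proof
  define k where "k = (P - x) / (\<Omega> + 1)"
  show k: "k > 0" unfolding k_def using assms by simp
  fix y assume y: "P \<le> y" "y \<le> \<Omega>"
  have "kink_loss P k y = k * (y - P)" unfolding kink_loss_def using y by simp
  also have "\<dots> \<le> k * \<Omega>" using k y assms by (intro mult_left_mono) auto
  also have "\<dots> < k * (\<Omega> + 1)" using k by simp
  also have "\<dots> = kink_loss P k x" unfolding k_def kink_loss_def using assms by simp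
  finally show "strict_pref (kinked_pref P k) (ennreal y) (ennreal x)"
    using assms y k by (simp add: strict_pref_kinked_pref)
qed

lemma kinked_pref_prefers_below:
  assumes "0 \<le> P" "P < x"
  obtains k where "k > 0" "\<And>y. 0 \<le> y \<Longrightarrow> y \<le> P \<Longrightarrow> strict_pref (kinked_pref P k) (ennreal y) (ennreal x)"
proof
  define k where "k = (P + 1) / (x - P)"
  show k: "k > 0" unfolding k_def using assms by simp
  fix y assume y: "0 \<le> y" "y \<le> P"
  have "kink_loss P k y = P - y" unfolding kink_loss_def using y by simp
  also have "\<dots> < P + 1" using y by simp
  also have "\<dots> = kink_loss P k x" unfolding k_def kink_loss_def using assms by simp
  finally show "strict_pref (kinked_pref P k) (ennreal y) (ennreal x)"
    using assms y k by (simp add: strict_pref_kinked_pref)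
qed

definition prefers_less :: pref where
  "prefers_less = (\<lambda>a b. a \<le> b)"

definition prefers_more :: pref where
  "prefers_more = (\<lambda>a b. b \<le> a)"

lemma prefers_less_SP: "prefers_less \<in> SP" and peak_prefers_less: "peak prefers_less = {0}"
proof -
  have less: "prefers_less = pref_of_loss id"
    unfolding prefers_less_def pref_of_loss_def by simp
  show peak: "peak prefers_less = {0}"
    unfolding less by (rule peak_pref_of_loss) simp_all
  have "continuous_complete_preorder prefers_less"
    unfolding less by (rule continuous_complete_preorder_pref_of_loss) simp
  then show "prefers_less \<in> SP"
    unfolding SP_def single_peaked_def using peak
    by (auto simp: strict_pref_def prefers_less_def ennreal_le_iff ennreal_less_iff)
qed

lemma prefers_more_SP: "prefers_more \<in> SP" and peak_prefers_more: "peak prefers_more = {top}"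
proof -
  show peak: "peak prefers_more = {top}"
    unfolding peak_def prefers_more_def by (auto intro: antisym)
  have "{y. x \<le> y} = {x..}" "{y. y \<le> x} = {..x}" for x :: ennreal by auto
  then have "continuous_complete_preorder prefers_more"
    unfolding prefers_more_def continuous_complete_preorder_def by auto
  then show "prefers_more \<in> SP"
    unfolding SP_def single_peaked_def using peak
    by (auto simp: strict_pref_def prefers_more_def ennreal_le_iff ennreal_less_iff top_unique)
qed

lemma rule_nonneg:
  "is_rule \<phi> \<Longrightarrow> \<forall>k. R k \<in> SP \<Longrightarrow> \<Omega> > 0 \<Longrightarrow> 0 \<le> \<phi> R \<Omega> i"
  unfolding is_rule_def by blast

lemma rule_le_endowment:
  fixes \<phi> :: "('n::finite) rule"
  assumes "is_rule \<phi>" "\<forall>k. R k \<in> SP" "\<Omega> > 0"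
  shows "\<phi> R \<Omega> i \<le> \<Omega>"
  using assms member_le_sum[of i UNIV "\<phi> R \<Omega>"] unfolding is_rule_def by auto

lemma equal_division_le_if_highest_peak:
  fixes \<phi> :: "('n::finite) rule"
  assumes "is_rule \<phi>" "peak_responsive \<phi>" "\<forall>k. R k \<in> SP" "\<Omega> > 0"
    and "\<And>j. the_peak (R j) \<le> the_peak (R i)"
  shows "\<Omega> / real CARD('n) \<le> \<phi> R \<Omega> i"
proof -
  have "\<phi> R \<Omega> j \<le> \<phi> R \<Omega> i" for j
    using assms(2-5) unfolding peak_responsive_def by (cases "j = i") auto
  then have "\<Omega> \<le> (\<Sum>j\<in>(UNIV::'n set). \<phi> R \<Omega> i)"
    using assms(1,3,4) sum_mono[of UNIV "\<phi> R \<Omega>"] unfolding is_rule_def by metis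
  then show ?thesis by (simp add: divide_le_eq mult.commute)
qed

lemma le_equal_division_if_lowest_peak:
  fixes \<phi> :: "('n::finite) rule"
  assumes "is_rule \<phi>" "peak_responsive \<phi>" "\<forall>k. R k \<in> SP" "\<Omega> > 0"
    and "\<And>j. the_peak (R i) \<le> the_peak (R j)"
  shows "\<phi> R \<Omega> i \<le> \<Omega> / real CARD('n)"
proof -
  have "\<phi> R \<Omega> i \<le> \<phi> R \<Omega> j" for j
    using assms(2-5) unfolding peak_responsive_def by (cases "j = i") auto
  then have "(\<Sum>j\<in>(UNIV::'n set). \<phi> R \<Omega> i) \<le> \<Omega>"
    using assms(1,3,4) sum_mono[of UNIV "\<lambda>_. \<phi> R \<Omega> i"] unfolding is_rule_def by metis
  then show ?thesis by (simp add: le_divide_eq mult.commute)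
qed

lemma option_set_prefers_more:
  fixes \<phi> :: "('n::finite) rule"
  assumes "is_rule \<phi>" "peak_responsive \<phi>" "\<Omega> > 0" "x \<in> option_set \<phi> i prefers_more \<Omega>"
  shows "\<Omega> / real CARD('n) \<le> x" "x \<le> \<Omega>"
proof -
  obtain R where R: "\<forall>k. (R(i := prefers_more)) k \<in> SP" "x = \<phi> (R(i := prefers_more)) \<Omega> i"
    using assms(4) prefers_more_SP unfolding option_set_def by auto
  have extreme: "the_peak ((R(i := prefers_more)) j) \<le> the_peak ((R(i := prefers_more)) i)" for j
    using the_peakI[OF peak_prefers_more] by simp
  show "\<Omega> / real CARD('n) \<le> x"
    unfolding R(2) by (rule equal_division_le_if_highest_peak[OF assms(1,2) R(1) assms(3) extreme])
  show "x \<le> \<Omega>" unfolding R(2) by (rule rule_le_endowment[OF assms(1) R(1) assms(3)])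
qed

lemma option_set_prefers_less:
  fixes \<phi> :: "('n::finite) rule"
  assumes "is_rule \<phi>" "peak_responsive \<phi>" "\<Omega> > 0" "x \<in> option_set \<phi> i prefers_less \<Omega>"
  shows "0 \<le> x" "x \<le> \<Omega> / real CARD('n)"
proof -
  obtain R where R: "\<forall>k. (R(i := prefers_less)) k \<in> SP" "x = \<phi> (R(i := prefers_less)) \<Omega> i"
    using assms(4) prefers_less_SP unfolding option_set_def by auto
  have extreme: "the_peak ((R(i := prefers_less)) i) \<le> the_peak ((R(i := prefers_less)) j)" for j
    using the_peakI[OF peak_prefers_less] by simp
  show "x \<le> \<Omega> / real CARD('n)"
    unfolding R(2) by (rule le_equal_division_if_lowest_peak[OF assms(1,2) R(1) assms(3) extreme])
  show "0 \<le> x" unfolding R(2) by (rule rule_nonneg[OF assms(1) R(1) assms(3)])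
qed

lemma obvious_manipulationI:
  assumes "\<And>j. j \<noteq> i \<Longrightarrow> R j \<in> SP"
    and "\<And>x'. x' \<in> option_set \<phi> i Q' \<Omega> \<Longrightarrow> strict_pref Q (ennreal x') (ennreal (\<phi> (R(i := Q)) \<Omega> i))"
  shows "obvious_manipulation \<phi> i Q Q' \<Omega>"
proof -
  have "\<phi> (R(i := Q')) \<Omega> i \<in> option_set \<phi> i Q' \<Omega>" "\<phi> (R(i := Q)) \<Omega> i \<in> option_set \<phi> i Q \<Omega>"
    using assms(1) unfolding option_set_def by blast+
  then show ?thesis
    using assms unfolding obvious_manipulation_def manipulation_def by blast
qed

lemma equal_division_le_if_NOM:
  fixes \<phi> :: "('n::finite) rule"
  assumes rule: "is_rule \<phi>" "own_peak_only \<phi>" "peak_responsive \<phi>" "NOM \<phi>"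
    and R: "\<forall>k. R k \<in> SP" and \<Omega>: "\<Omega> > 0" and peak: "peak (R i) = {ennreal (\<Omega> / real CARD('n))}"
  shows "\<Omega> / real CARD('n) \<le> \<phi> R \<Omega> i"
proof (rule ccontr)
  define P where "P = \<Omega> / real CARD('n)"
  have P: "P \<ge> 0" unfolding P_def using \<Omega> by simp
  assume "\<not> P \<le> \<phi> R \<Omega> i"
  then have "\<phi> R \<Omega> i < P" by simp
  then obtain k where k: "k > 0"
    and better: "\<And>y. P \<le> y \<Longrightarrow> y \<le> \<Omega> \<Longrightarrow> strict_pref (kinked_pref P k) (ennreal y) (ennreal (\<phi> R \<Omega> i))"
    using kinked_pref_prefers_above[OF rule_nonneg[OF rule(1) R \<Omega>] _ less_imp_le[OF \<Omega>]] by blast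
  note Q = kinked_pref_SP[OF P k]
  have same: "\<phi> R \<Omega> i = \<phi> (R(i := kinked_pref P k)) \<Omega> i"
    by (rule rule(2)[unfolded own_peak_only_def, rule_format, OF R[rule_format] \<Omega> Q(1)])
      (use Q(2) peak in \<open>simp add: P_def\<close>)
  have "obvious_manipulation \<phi> i (kinked_pref P k) prefers_more \<Omega>"
  proof (rule obvious_manipulationI[of i R])
    fix x' assume "x' \<in> option_set \<phi> i prefers_more \<Omega>"
    from option_set_prefers_more[OF rule(1,3) \<Omega> this] have "P \<le> x'" "x' \<le> \<Omega>"
      unfolding P_def .
    from better[OF this]
    show "strict_pref (kinked_pref P k) (ennreal x') (ennreal (\<phi> (R(i := kinked_pref P k)) \<Omega> i))"
      unfolding same .
  qed (use R in blast)
  then show False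
    using rule(4)[unfolded NOM_def, rule_format, OF Q(1) prefers_more_SP \<Omega>] by blast
qed

lemma le_equal_division_if_NOM:
  fixes \<phi> :: "('n::finite) rule"
  assumes rule: "is_rule \<phi>" "own_peak_only \<phi>" "peak_responsive \<phi>" "NOM \<phi>"
    and R: "\<forall>k. R k \<in> SP" and \<Omega>: "\<Omega> > 0" and peak: "peak (R i) = {ennreal (\<Omega> / real CARD('n))}"
  shows "\<phi> R \<Omega> i \<le> \<Omega> / real CARD('n)"
proof (rule ccontr)
  define P where "P = \<Omega> / real CARD('n)"
  have P: "P \<ge> 0" unfolding P_def using \<Omega> by simp
  assume "\<not> \<phi> R \<Omega> i \<le> P"
  then have "P < \<phi> R \<Omega> i" by simp
  then obtain k where k: "k > 0"
    and better: "\<And>y. 0 \<le> y \<Longrightarrow> y \<le> P \<Longrightarrow> strict_pref (kinked_pref P k) (ennreal y) (ennreal (\<phi> R \<Omega> i))"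
    using kinked_pref_prefers_below[OF P] by blast
  note Q = kinked_pref_SP[OF P k]
  have same: "\<phi> R \<Omega> i = \<phi> (R(i := kinked_pref P k)) \<Omega> i"
    by (rule rule(2)[unfolded own_peak_only_def, rule_format, OF R[rule_format] \<Omega> Q(1)])
      (use Q(2) peak in \<open>simp add: P_def\<close>)
  have "obvious_manipulation \<phi> i (kinked_pref P k) prefers_less \<Omega>"
  proof (rule obvious_manipulationI[of i R])
    fix x' assume "x' \<in> option_set \<phi> i prefers_less \<Omega>"
    from option_set_prefers_less[OF rule(1,3) \<Omega> this] have "0 \<le> x'" "x' \<le> P"
      unfolding P_def .
    from better[OF this]
    show "strict_pref (kinked_pref P k) (ennreal x') (ennreal (\<phi> (R(i := kinked_pref P k)) \<Omega> i))"
      unfolding same .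
  qed (use R in blast)
  then show False
    using rule(4)[unfolded NOM_def, rule_format, OF Q(1) prefers_less_SP \<Omega>] by blast
qed

theorem lemma2:
  fixes \<phi> :: "('n::finite) rule"
  assumes "is_rule \<phi>"
    and "own_peak_only \<phi>"
    and "peak_responsive \<phi>"
    and "NOM \<phi>"
  shows "equal_division_guarantee \<phi>"
  unfolding equal_division_guarantee_def
proof (intro allI impI)
  fix R :: "'n \<Rightarrow> pref" and \<Omega> :: real and i :: 'n
  assume R: "\<forall>k. R k \<in> SP" and \<Omega>: "\<Omega> > 0"
    and "the_peak (R i) = ennreal (\<Omega> / real CARD('n))"
  then have peak: "peak (R i) = {ennreal (\<Omega> / real CARD('n))}"
    using peak_eq_the_peak by metis
  have "\<phi> R \<Omega> i = \<Omega> / real CARD('n)"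
    using equal_division_le_if_NOM[OF assms R \<Omega> peak] le_equal_division_if_NOM[OF assms R \<Omega> peak]
    by (rule antisym[rotated])
  then show "indiff (R i) (ennreal (\<phi> R \<Omega> i)) (ennreal (\<Omega> / real CARD('n)))"
    using R indiff_refl by simp
qed

end
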